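(* Consider a population model with two biallelic causal variants (alleles $A_1,A_2$ and $B_1,B_2$) and a biallelic marker (alleles $M_1,M_2$), with ordered genotypes, in which the marker is in linkage disequilibrium with the first causal variant and in linkage equilibrium with the second causal variant, and Hardy–Weinberg equilibrium holds. Let $\pi\in(0,1)$ be the probability that a random individual is a case and $\pi_{kl}$ the probability of being a case given ordered genotype $(A_k,A_l)$ at the first causal variant, with $\pi_{12}=\pi_{21}$. Then \[ \frac{q_1^U-q_1^A}{\sqrt{q_1q_2}} \;=\; \Delta\,\frac{p_1^U-p_1^A}{\sqrt{p_1p_2}}, \qquad \Delta:=\frac{D_{11}}{\sqrt{p_1p_2q_1q_2}},\quad D_{11}=\mathrm{P}(A_1M_1)-p_1q_1 . \]
   Context: A random individual is drawn from a population. Each individual carries two ordered haplotypes, and at each of three loci (first causal variant with alleles $A_1,A_2$; second causal variant with alleles $B_1,B_2$; marker with alleles $M_1,M_2$) has an ordered genotype. The individual is a case (event $A$) or a control (event $U$). $p_i\in(0,1)$, $q_k\in(0,1)$ are the population frequencies of alleles $A_i$ and $M_k$ ($p_2=1-p_1$, $q_2=1-q_1$), and $\mathrm{P}(A_1M_1)$ the population frequency of haplotype $(A_1,M_1)$. $q_1^A,q_1^U$ are the frequencies of allele $M_1$ among cases and among controls, and $p_1^A,p_1^U$ the frequencies of allele $A_1$ among cases and among controls (allele frequency among a group $=$ probability of homozygous genotype plus half the probabilities of the two ordered heterozygous genotypes, within that group). The marker is not causal: given the genotypes at the two causal variants, case/control status is independent of the marker genotype. Linkage equilibrium of the marker with the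 second causal variant means that, given the genotype at the first causal variant, the marker genotype is independent of the genotype at the second causal variant. Hardy–Weinberg equilibrium means the two haplotypes of an individual are independent. *)

theory Defs
  imports "HOL-Probability.Probability"
begin

datatype allele = al1 | al2

text \<open>A haplotype carries one allele at each of the three loci:
  (first causal variant A, second causal variant B, marker M).\<close>
type_synonym haplotype = "allele \<times> allele \<times> allele"

text \<open>An individual: two ordered haplotypes, and status (True = case, False = control).\<close>
type_synonym indiv = "(haplotype \<times> haplotype) \<times> bool"

definition hap1 :: "indiv \<Rightarrow> haplotype" where "hap1 w = fst (fst w)"
definition hap2 :: "indiv \<Rightarrow> haplotype" where "hap2 w = snd (fst w)"

definition locA :: "haplotype \<Rightarrow> allele" where "locA h = fst h"
definition locB :: "haplotype \<Rightarrow> allele" where "locB h = fst (snd h)"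
definition locM :: "haplotype \<Rightarrow> allele" where "locM h = snd (snd h)"

definition gA :: "indiv \<Rightarrow> allele \<times> allele" where "gA w = (locA (hap1 w), locA (hap2 w))"
definition gB :: "indiv \<Rightarrow> allele \<times> allele" where "gB w = (locB (hap1 w), locB (hap2 w))"
definition gM :: "indiv \<Rightarrow> allele \<times> allele" where "gM w = (locM (hap1 w), locM (hap2 w))"

definition caseEv :: "indiv set" where "caseEv = {w. snd w}"
definition ctrlEv :: "indiv set" where "ctrlEv = {w. \<not> snd w}"

definition Pr :: "indiv pmf \<Rightarrow> indiv set \<Rightarrow> real" where
  "Pr M E = measure_pmf.prob M E"

definition condPr :: "indiv pmf \<Rightarrow> indiv set \<Rightarrow> indiv set \<Rightarrow> real" where
  "condPr M E F = Pr M (E \<inter> F) / Pr M F"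

definition allele1Freq :: "indiv pmf \<Rightarrow> (indiv \<Rightarrow> allele \<times> allele) \<Rightarrow> indiv set \<Rightarrow> real" where
  "allele1Freq M g F =
     condPr M {w. g w = (al1, al1)} F
     + (condPr M {w. g w = (al1, al2)} F + condPr M {w. g w = (al2, al1)} F) / 2"

text \<open>Population frequency of the haplotype (A_1, M_1) (average over the two haplotype slots;
  under Hardy--Weinberg equilibrium both slots have the same haplotype distribution).\<close>
definition hapA1M1Freq :: "indiv pmf \<Rightarrow> real" where
  "hapA1M1Freq M =
     (Pr M {w. locA (hap1 w) = al1 \<and> locM (hap1 w) = al1}
      + Pr M {w. locA (hap2 w) = al1 \<and> locM (hap2 w) = al1}) / 2"

definition HWE :: "indiv pmf \<Rightarrow> bool" where
  "HWE M \<longleftrightarrow> (\<forall>x y. Pr M {w. hap1 w = x \<and> hap2 w = y} = Pr M {w. hap1 w = x} * Pr M {w. hap2 w = y})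
              \<and> (\<forall>x. Pr M {w. hap1 w = x} = Pr M {w. hap2 w = x})"

text \<open>The marker is not causal: given the genotypes at both causal variants, status is
  independent of the marker genotype (conditional independence, product form).\<close>
definition marker_not_causal :: "indiv pmf \<Rightarrow> bool" where
  "marker_not_causal M \<longleftrightarrow> (\<forall>a b m.
     Pr M (caseEv \<inter> {w. gA w = a \<and> gB w = b \<and> gM w = m}) * Pr M {w. gA w = a \<and> gB w = b}
     = Pr M (caseEv \<inter> {w. gA w = a \<and> gB w = b}) * Pr M {w. gA w = a \<and> gB w = b \<and> gM w = m})"

text \<open>Linkage equilibrium of marker and second causal variant: given the genotype at the first
  causal variant, the marker genotype is independent of the genotype at the second one.\<close>
definition marker_LE_B :: "indiv pmf \<Rightarrow> bool" where
  "marker_LE_B M \<longleftrightarrow> (\<forall>a b m.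
     Pr M {w. gA w = a \<and> gB w = b \<and> gM w = m} * Pr M {w. gA w = a}
     = Pr M {w. gA w = a \<and> gB w = b} * Pr M {w. gA w = a \<and> gM w = m})"

end

theory Submission
  imports Defs
begin

text \<open>
  Under Hardy-Weinberg equilibrium the joint genotype at the first causal variant and the marker
  factorises through the (A, M) haplotype frequencies h k m, and since the marker is not causal
  and is in linkage equilibrium with the second causal variant,
  P(case, A = (k, l), M = (m, n)) = pi_kl * h k m * h l n.
  Hence the excess of allele 1 among cases over its population frequency is, at the marker and at
  the causal variant alike, a multiple of one and the same sum over k, l: the multiplier is D11 at
  the marker, because h k 1 = p_k q_1 +- D11, and p_1 p_2 at the causal variant.
\<close>

lemma UNIV_allele: "UNIV = {al1, al2}"
  using allele.exhaust by auto

instance allele :: finite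
  by standard (simp add: UNIV_allele)

lemma Pr_partition:
  fixes f :: "indiv \<Rightarrow> 'a::finite"
  shows "Pr M E = (\<Sum>x\<in>UNIV. Pr M (E \<inter> {w. f w = x}))"
proof -
  have "E = (\<Union>x\<in>UNIV. E \<inter> {w. f w = x})"
    by blast
  then have "Pr M E = Pr M (\<Union>x\<in>UNIV. E \<inter> {w. f w = x})"
    by simp
  also have "\<dots> = (\<Sum>x\<in>UNIV. Pr M (E \<inter> {w. f w = x}))"
    unfolding Pr_def by (rule measure_pmf.finite_measure_finite_Union) (auto simp: disjoint_family_on_def)
  finally show ?thesis .
qed

lemma Pr_partition_pair:
  fixes f :: "indiv \<Rightarrow> 'a::finite \<times> 'b::finite"
  shows "Pr M E = (\<Sum>a\<in>UNIV. \<Sum>b\<in>UNIV. Pr M (E \<inter> {w. f w = (a, b)}))"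
  unfolding sum.cartesian_product UNIV_Times_UNIV case_prod_unfold prod.collapse by (rule Pr_partition)

lemma Pr_UNIV: "Pr M UNIV = 1"
  unfolding Pr_def by simp

lemma Pr_null_subset: "Pr M F = 0 \<Longrightarrow> E \<subseteq> F \<Longrightarrow> Pr M E = 0"
  unfolding Pr_def by (metis measure_pmf.finite_measure_mono measure_nonneg order_antisym sets_measure_pmf UNIV_I)

lemma Pr_case_ctrl: "Pr M E = Pr M (caseEv \<inter> E) + Pr M (ctrlEv \<inter> E)"
proof -
  have "E = (caseEv \<inter> E) \<union> (ctrlEv \<inter> E)" "(caseEv \<inter> E) \<inter> (ctrlEv \<inter> E) = {}"
    by (auto simp: caseEv_def ctrlEv_def)
  then show ?thesis
    unfolding Pr_def by (metis measure_pmf.finite_measure_Union sets_measure_pmf UNIV_I)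
qed

lemma HWE_haplotype_pair:
  assumes "HWE M"
  shows "map_pmf (\<lambda>w. (hap1 w, hap2 w)) M = pair_pmf (map_pmf hap1 M) (map_pmf hap1 M)"
proof (rule pmf_eqI)
  fix xy :: "haplotype \<times> haplotype"
  obtain x y where xy: "xy = (x, y)"
    by (cases xy) blast
  have "pmf (map_pmf (\<lambda>w. (hap1 w, hap2 w)) M) xy = Pr M {w. hap1 w = x \<and> hap2 w = y}"
    unfolding xy Pr_def pmf_map by (simp add: vimage_def)
  also have "\<dots> = Pr M {w. hap1 w = x} * Pr M {w. hap1 w = y}"
    using assms unfolding HWE_def by metis
  also have "\<dots> = pmf (pair_pmf (map_pmf hap1 M) (map_pmf hap1 M)) xy"
    unfolding xy Pr_def pmf_pair pmf_map by (simp add: vimage_def)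
  finally show "pmf (map_pmf (\<lambda>w. (hap1 w, hap2 w)) M) xy = \<dots>" .
qed

lemma HWE_Pr_haplotypes:
  assumes "HWE M"
  shows "Pr M {w. P (hap1 w) \<and> Q (hap2 w)} = Pr M {w. P (hap1 w)} * Pr M {w. Q (hap1 w)}"
proof -
  have "Pr M {w. P (hap1 w) \<and> Q (hap2 w)}
      = measure_pmf.prob (map_pmf (\<lambda>w. (hap1 w, hap2 w)) M) (Collect P \<times> Collect Q)"
    unfolding Pr_def measure_map_pmf by (simp add: vimage_def)
  also have "\<dots> = Pr M {w. P (hap1 w)} * Pr M {w. Q (hap1 w)}"
    unfolding HWE_haplotype_pair[OF assms] Pr_def
    by (simp add: measure_pmf_prob_product measure_map_pmf vimage_def)
  finally show ?thesis .
qed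

lemma HWE_Pr_hap2:
  assumes "HWE M"
  shows "Pr M {w. Q (hap2 w)} = Pr M {w. Q (hap1 w)}"
  using HWE_Pr_haplotypes[OF assms, of "\<lambda>_. True" Q] by (simp add: Pr_def)

definition hapFreqAM :: "indiv pmf \<Rightarrow> allele \<Rightarrow> allele \<Rightarrow> real" where
  "hapFreqAM M k m = Pr M {w. locA (hap1 w) = k \<and> locM (hap1 w) = m}"

lemma HWE_hapA1M1Freq: "HWE M \<Longrightarrow> hapA1M1Freq M = hapFreqAM M al1 al1"
  unfolding hapA1M1Freq_def hapFreqAM_def
  using HWE_Pr_hap2[of M "\<lambda>h. locA h = al1 \<and> locM h = al1"] by simp

lemma HWE_Pr_gA_gM:
  assumes "HWE M"
  shows "Pr M {w. gA w = (k, l) \<and> gM w = (m, n)} = hapFreqAM M k m * hapFreqAM M l n"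
  unfolding hapFreqAM_def gA_def gM_def
  using HWE_Pr_haplotypes[OF assms, of "\<lambda>h. locA h = k \<and> locM h = m" "\<lambda>h. locA h = l \<and> locM h = n"]
  by (simp add: conj_ac)

lemma Pr_locus_marginal:
  fixes loc loc' :: "haplotype \<Rightarrow> allele"
  shows "Pr M {w. loc (hap1 w) = a} = (\<Sum>b\<in>UNIV. Pr M {w. loc (hap1 w) = a \<and> loc' (hap1 w) = b})"
  by (subst Pr_partition[where f = "\<lambda>w. loc' (hap1 w)"]) (simp add: Collect_conj_eq)

lemma HWE_allele1Freq_UNIV:
  assumes "HWE M"
  shows "allele1Freq M (\<lambda>w. (loc (hap1 w), loc (hap2 w))) UNIV = Pr M {w. loc (hap1 w) = al1}"
proof -
  let ?P = "\<lambda>a. Pr M {w. loc (hap1 w) = a}"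
  have genotype: "Pr M {w. loc (hap1 w) = a \<and> loc (hap2 w) = b} = ?P a * ?P b" for a b
    using HWE_Pr_haplotypes[OF assms, of "\<lambda>h. loc h = a" "\<lambda>h. loc h = b"] by simp
  have total: "?P al1 + ?P al2 = 1"
    using Pr_partition[of M UNIV "\<lambda>w. loc (hap1 w)"] by (simp add: UNIV_allele Pr_def)
  have "allele1Freq M (\<lambda>w. (loc (hap1 w), loc (hap2 w))) UNIV = ?P al1 * (?P al1 + ?P al2)"
    unfolding allele1Freq_def condPr_def by (simp add: genotype Pr_UNIV algebra_simps)
  then show ?thesis
    unfolding total by simp
qed

lemma marker_not_causal_given_gA:
  assumes not_causal: "marker_not_causal M" and LE: "marker_LE_B M"
  shows "Pr M (caseEv \<inter> {w. gA w = a \<and> gM w = m}) * Pr M {w. gA w = a}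
       = Pr M (caseEv \<inter> {w. gA w = a}) * Pr M {w. gA w = a \<and> gM w = m}"
proof -
  have given_gB: "Pr M (caseEv \<inter> {w. gA w = a \<and> gB w = b \<and> gM w = m}) * Pr M {w. gA w = a}
       = Pr M (caseEv \<inter> {w. gA w = a \<and> gB w = b}) * Pr M {w. gA w = a \<and> gM w = m}" for b
  proof (cases "Pr M {w. gA w = a \<and> gB w = b} = 0")
    case True
    have "Pr M (caseEv \<inter> {w. gA w = a \<and> gB w = b \<and> gM w = m}) = 0"
      "Pr M (caseEv \<inter> {w. gA w = a \<and> gB w = b}) = 0"
      by (auto intro: Pr_null_subset[OF True])
    then show ?thesis
      by simp
  next
    case False
    let ?c = "Pr M (caseEv \<inter> {w. gA w = a \<and> gB w = b \<and> gM w = m})"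
      and ?cb = "Pr M (caseEv \<inter> {w. gA w = a \<and> gB w = b})"
      and ?ab = "Pr M {w. gA w = a \<and> gB w = b}" and ?abm = "Pr M {w. gA w = a \<and> gB w = b \<and> gM w = m}"
      and ?a = "Pr M {w. gA w = a}" and ?am = "Pr M {w. gA w = a \<and> gM w = m}"
    have "?c * ?a * ?ab = (?c * ?ab) * ?a"
      by (simp only: ac_simps)
    also have "\<dots> = ?cb * (?abm * ?a)"
      using not_causal unfolding marker_not_causal_def by (simp only: ac_simps)
    also have "\<dots> = ?cb * ?am * ?ab"
      using LE unfolding marker_LE_B_def by (simp only: ac_simps)
    finally show ?thesis
      using False by simp
  qed
  have by_gB: "Pr M (caseEv \<inter> {w. gA w = a \<and> P w}) = (\<Sum>b\<in>UNIV. Pr M (caseEv \<inter> {w. gA w = a \<and> gB w = b \<and> P w}))" for P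
    by (subst Pr_partition[where f = gB]) (auto intro!: sum.cong arg_cong[where f = "Pr M"])
  show ?thesis
    using by_gB[of "\<lambda>w. gM w = m"] by_gB[of "\<lambda>_. True"] given_gB by (simp add: sum_distrib_right)
qed

lemma Pr_case_gA_gM:
  assumes hwe: "HWE M" and not_causal: "marker_not_causal M" and LE: "marker_LE_B M"
  shows "Pr M (caseEv \<inter> {w. gA w = (k, l) \<and> gM w = (m, n)})
       = condPr M caseEv {w. gA w = (k, l)} * hapFreqAM M k m * hapFreqAM M l n"
proof (cases "Pr M {w. gA w = (k, l)} = 0")
  case True
  have "Pr M (caseEv \<inter> {w. gA w = (k, l) \<and> gM w = (m, n)}) = 0"
    by (auto intro: Pr_null_subset[OF True])
  with True show ?thesis
    by (simp add: condPr_def)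
next
  case False
  then show ?thesis
    using marker_not_causal_given_gA[OF not_causal LE, of "(k, l)" "(m, n)"]
    unfolding condPr_def HWE_Pr_gA_gM[OF hwe] by (simp add: Int_commute field_simps)
qed

definition dosage :: "allele \<Rightarrow> allele \<Rightarrow> real" where
  "dosage a b = (of_bool (a = al1) + of_bool (b = al1)) / 2"

definition allele1Mass :: "indiv pmf \<Rightarrow> (indiv \<Rightarrow> allele \<times> allele) \<Rightarrow> indiv set \<Rightarrow> real" where
  "allele1Mass M g F = (\<Sum>a\<in>UNIV. \<Sum>b\<in>UNIV. Pr M (F \<inter> {w. g w = (a, b)}) * dosage a b)"

lemma allele1Freq_eq_Mass: "allele1Freq M g F = allele1Mass M g F / Pr M F"
  unfolding allele1Freq_def allele1Mass_def condPr_def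
  by (simp add: UNIV_allele dosage_def add_divide_distrib Int_commute[of F])

lemma allele1Mass_excess:
  "allele1Mass M g F - t * Pr M F = (\<Sum>a\<in>UNIV. \<Sum>b\<in>UNIV. Pr M (F \<inter> {w. g w = (a, b)}) * (dosage a b - t))"
  unfolding allele1Mass_def Pr_partition_pair[of M F g]
  by (simp add: sum_distrib_left sum_subtractf algebra_simps)

lemma allele1Freq_ctrl_minus_case:
  assumes "0 < Pr M caseEv" "Pr M caseEv < 1"
  shows "allele1Freq M g ctrlEv - allele1Freq M g caseEv
       = (allele1Freq M g UNIV * Pr M caseEv - allele1Mass M g caseEv) / (Pr M caseEv * (1 - Pr M caseEv))"
proof -
  have Mass_ctrl: "allele1Mass M g ctrlEv = allele1Mass M g UNIV - allele1Mass M g caseEv"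
  proof -
    have "Pr M (ctrlEv \<inter> E) = Pr M (UNIV \<inter> E) - Pr M (caseEv \<inter> E)" for E
      using Pr_case_ctrl[of M E] by simp
    then show ?thesis
      unfolding allele1Mass_def by (simp only: left_diff_distrib sum_subtractf)
  qed
  have Pr_ctrl: "Pr M ctrlEv = 1 - Pr M caseEv"
    using Pr_case_ctrl[of M UNIV] by (simp add: Pr_UNIV)
  have frac: "(U - c) / (1 - \<pi>) - c / \<pi> = (U * \<pi> - c) / (\<pi> * (1 - \<pi>))"
    if "0 < \<pi>" "\<pi> < 1" for U c \<pi> :: real
    using that by (simp add: field_simps)
  show ?thesis
    unfolding allele1Freq_eq_Mass Mass_ctrl Pr_ctrl Pr_UNIV div_by_1 by (rule frac[OF assms])
qed

lemma sum_swap_nested: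
  "(\<Sum>m\<in>A. \<Sum>n\<in>B. \<Sum>k\<in>C. \<Sum>l\<in>D. g k l m n) = (\<Sum>k\<in>C. \<Sum>l\<in>D. \<Sum>m\<in>A. \<Sum>n\<in>B. g k l m n)"
  unfolding sum.swap[of _ A C] sum.swap[of _ B C] sum.swap[of _ B D] sum.swap[of _ A D] ..

lemma LD_dosage_identity:
  fixes h f :: "allele \<Rightarrow> allele \<Rightarrow> real"
  assumes total: "(\<Sum>k\<in>UNIV. \<Sum>m\<in>UNIV. h k m) = 1"
    and p: "p = h al1 al1 + h al1 al2" and q: "q = h al1 al1 + h al2 al1"
  shows "(\<Sum>m\<in>UNIV. \<Sum>n\<in>UNIV. \<Sum>k\<in>UNIV. \<Sum>l\<in>UNIV. f k l * h k m * h l n * (dosage m n - q)) * (p * (1 - p))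
       = (h al1 al1 - p * q) * (\<Sum>k\<in>UNIV. \<Sum>l\<in>UNIV. \<Sum>m\<in>UNIV. \<Sum>n\<in>UNIV. f k l * h k m * h l n * (dosage k l - p))"
proof -
  define D where "D = h al1 al1 - p * q"
  define pA where "pA k = h k al1 + h k al2" for k
  define sgn where "sgn k = (if k = al1 then 1 else - 1 :: real)" for k
  define S where "S k l = (sgn k * pA l + pA k * sgn l) / 2" for k l
  have pA: "pA al1 = p" "pA al2 = 1 - p"
    using total by (simp_all add: pA_def p UNIV_allele)
  have marker_shift: "h k al1 - q * pA k = sgn k * D" for k
    by (cases k) (simp_all add: pA sgn_def D_def q p algebra_simps)
  have causal_shift: "(of_bool (k = al1) - p) * pA k = sgn k * (p * (1 - p))" for k
    by (cases k) (simp_all add: pA sgn_def algebra_simps)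
  have marker: "(\<Sum>m\<in>UNIV. \<Sum>n\<in>UNIV. f k l * h k m * h l n * (dosage m n - q)) = f k l * D * S k l" for k l
  proof -
    have "(\<Sum>m\<in>UNIV. \<Sum>n\<in>UNIV. f k l * h k m * h l n * (dosage m n - q))
        = f k l * ((h k al1 - q * pA k) * pA l + pA k * (h l al1 - q * pA l)) / 2"
      by (simp add: UNIV_allele dosage_def pA_def field_simps)
    also have "\<dots> = f k l * (sgn k * D * pA l + pA k * (sgn l * D)) / 2"
      by (simp only: marker_shift)
    finally show ?thesis
      by (simp add: S_def algebra_simps)
  qed
  have causal: "(\<Sum>m\<in>UNIV. \<Sum>n\<in>UNIV. f k l * h k m * h l n * (dosage k l - p)) = f k l * (p * (1 - p)) * S k l" for k l
  proof -
    have "(\<Sum>m\<in>UNIV. \<Sum>n\<in>UNIV. f k l * h k m * h l n * (dosage k l - p))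
        = f k l * ((of_bool (k = al1) - p) * pA k * pA l + pA k * ((of_bool (l = al1) - p) * pA l)) / 2"
      by (simp add: UNIV_allele dosage_def pA_def field_simps)
    also have "\<dots> = f k l * (sgn k * (p * (1 - p)) * pA l + pA k * (sgn l * (p * (1 - p)))) / 2"
      by (simp only: causal_shift)
    finally show ?thesis
      by (simp add: S_def algebra_simps)
  qed
  show ?thesis
    unfolding sum_swap_nested[where A = UNIV] marker causal D_def[symmetric]
    by (simp add: sum_distrib_left sum_distrib_right ac_simps)
qed

lemma case_allele1_excess_LD:
  assumes hwe: "HWE M" and not_causal: "marker_not_causal M" and LE: "marker_LE_B M"
  defines "p \<equiv> allele1Freq M gA UNIV" and "q \<equiv> allele1Freq M gM UNIV" and "\<pi> \<equiv> Pr M caseEv"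
  shows "(allele1Mass M gM caseEv - q * \<pi>) * (p * (1 - p))
       = (hapA1M1Freq M - p * q) * (allele1Mass M gA caseEv - p * \<pi>)"
proof -
  let ?h = "hapFreqAM M" and ?f = "\<lambda>k l. condPr M caseEv {w. gA w = (k, l)}"
  have joint: "Pr M (caseEv \<inter> {w. gA w = (k, l) \<and> gM w = (m, n)}) = ?f k l * ?h k m * ?h l n" for k l m n
    by (rule Pr_case_gA_gM[OF hwe not_causal LE])
  have case_gM: "Pr M (caseEv \<inter> {w. gM w = (m, n)}) = (\<Sum>k\<in>UNIV. \<Sum>l\<in>UNIV. ?f k l * ?h k m * ?h l n)" for m n
  proof -
    have "caseEv \<inter> {w. gM w = (m, n)} \<inter> {w. gA w = (k, l)} = caseEv \<inter> {w. gA w = (k, l) \<and> gM w = (m, n)}" for k l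
      by blast
    then show ?thesis
      using Pr_partition_pair[of M "caseEv \<inter> {w. gM w = (m, n)}" gA] by (simp add: joint)
  qed
  have case_gA: "Pr M (caseEv \<inter> {w. gA w = (k, l)}) = (\<Sum>m\<in>UNIV. \<Sum>n\<in>UNIV. ?f k l * ?h k m * ?h l n)" for k l
  proof -
    have "caseEv \<inter> {w. gA w = (k, l)} \<inter> {w. gM w = (m, n)} = caseEv \<inter> {w. gA w = (k, l) \<and> gM w = (m, n)}" for m n
      by blast
    then show ?thesis
      using Pr_partition_pair[of M "caseEv \<inter> {w. gA w = (k, l)}" gM] by (simp add: joint)
  qed
  have total: "(\<Sum>k\<in>UNIV. \<Sum>m\<in>UNIV. ?h k m) = 1"
    using Pr_partition_pair[of M UNIV "\<lambda>w. (locA (hap1 w), locM (hap1 w))"]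
    by (simp add: hapFreqAM_def Pr_UNIV)
  have p: "p = ?h al1 al1 + ?h al1 al2"
    using HWE_allele1Freq_UNIV[OF hwe, of locA] Pr_locus_marginal[of M locA al1 locM]
    by (simp add: p_def gA_def[abs_def] hapFreqAM_def UNIV_allele)
  have q: "q = ?h al1 al1 + ?h al2 al1"
    using HWE_allele1Freq_UNIV[OF hwe, of locM] Pr_locus_marginal[of M locM al1 locA]
    by (simp add: q_def gM_def[abs_def] hapFreqAM_def UNIV_allele conj_commute)
  have "allele1Mass M gM caseEv - q * \<pi>
      = (\<Sum>m\<in>UNIV. \<Sum>n\<in>UNIV. \<Sum>k\<in>UNIV. \<Sum>l\<in>UNIV. ?f k l * ?h k m * ?h l n * (dosage m n - q))"
    unfolding \<pi>_def allele1Mass_excess case_gM by (simp add: sum_distrib_right)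
  moreover have "allele1Mass M gA caseEv - p * \<pi>
      = (\<Sum>k\<in>UNIV. \<Sum>l\<in>UNIV. \<Sum>m\<in>UNIV. \<Sum>n\<in>UNIV. ?f k l * ?h k m * ?h l n * (dosage k l - p))"
    unfolding \<pi>_def allele1Mass_excess case_gA by (simp add: sum_distrib_right)
  ultimately show ?thesis
    using LD_dosage_identity[OF total p q, of ?f] HWE_hapA1M1Freq[OF hwe] by simp
qed

lemma divide_sqrt_rescale:
  fixes a b x y D :: real
  assumes "0 < a" "0 < b" and "x = D / a * y"
  shows "x / sqrt b = D / sqrt (a * b) * (y / sqrt a)"
proof -
  have "D / a = D / (sqrt a * sqrt a)"
    using assms(1) by simp
  then show ?thesis
    using assms by (simp add: real_sqrt_mult field_simps)
qed

lemma allele1Freq_case_control_shift: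
  fixes M :: "indiv pmf"
  defines "p \<equiv> allele1Freq M gA UNIV" and "q \<equiv> allele1Freq M gM UNIV" and "\<pi> \<equiv> Pr M caseEv"
  assumes hwe: "HWE M" and not_causal: "marker_not_causal M" and LE: "marker_LE_B M"
    and case_pos: "0 < \<pi>" and case_lt1: "\<pi> < 1" and p_pos: "0 < p" and p_lt1: "p < 1"
  shows "allele1Freq M gM ctrlEv - allele1Freq M gM caseEv
       = (hapA1M1Freq M - p * q) / (p * (1 - p)) * (allele1Freq M gA ctrlEv - allele1Freq M gA caseEv)"
proof -
  have dq: "allele1Freq M gM ctrlEv - allele1Freq M gM caseEv
      = (q * \<pi> - allele1Mass M gM caseEv) / (\<pi> * (1 - \<pi>))"
    unfolding q_def \<pi>_def by (rule allele1Freq_ctrl_minus_case) (use case_pos case_lt1 in \<open>simp_all add: \<pi>_def\<close>)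
  have dp: "allele1Freq M gA ctrlEv - allele1Freq M gA caseEv
      = (p * \<pi> - allele1Mass M gA caseEv) / (\<pi> * (1 - \<pi>))"
    unfolding p_def \<pi>_def by (rule allele1Freq_ctrl_minus_case) (use case_pos case_lt1 in \<open>simp_all add: \<pi>_def\<close>)
  have "(q * \<pi> - allele1Mass M gM caseEv) * (p * (1 - p)) = (hapA1M1Freq M - p * q) * (p * \<pi> - allele1Mass M gA caseEv)"
    using case_allele1_excess_LD[OF hwe not_causal LE, folded p_def q_def \<pi>_def]
    by (metis minus_diff_eq mult_minus_left mult_minus_right)
  then have "q * \<pi> - allele1Mass M gM caseEv
      = (hapA1M1Freq M - p * q) / (p * (1 - p)) * (p * \<pi> - allele1Mass M gA caseEv)"
    using p_pos p_lt1 by (simp add: eq_divide_eq)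
  then show ?thesis
    unfolding dq dp by simp
qed

theorem mainTheorem3:
  fixes M :: "indiv pmf"
  defines "p1 \<equiv> allele1Freq M gA UNIV"
      and "q1 \<equiv> allele1Freq M gM UNIV"
      and "p1A \<equiv> allele1Freq M gA caseEv"
      and "p1U \<equiv> allele1Freq M gA ctrlEv"
      and "q1A \<equiv> allele1Freq M gM caseEv"
      and "q1U \<equiv> allele1Freq M gM ctrlEv"
      and "D11 \<equiv> hapA1M1Freq M - allele1Freq M gA UNIV * allele1Freq M gM UNIV"
      and "\<pi> \<equiv> Pr M caseEv"
      and "\<pi>kl \<equiv> (\<lambda>k l. condPr M caseEv {w. gA w = (k, l)})"
  assumes hwe: "HWE M"
      and not_causal: "marker_not_causal M"
      and LE: "marker_LE_B M"
      and LD: "D11 \<noteq> 0"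
      and pi_pos: "0 < \<pi>" and pi_lt1: "\<pi> < 1"
      and pi_sym: "\<pi>kl al1 al2 = \<pi>kl al2 al1"
      and p1_pos: "0 < p1" and p1_lt1: "p1 < 1"
      and q1_pos: "0 < q1" and q1_lt1: "q1 < 1"
  shows "(q1U - q1A) / sqrt (q1 * (1 - q1))
         = (D11 / sqrt (p1 * (1 - p1) * q1 * (1 - q1))) * ((p1U - p1A) / sqrt (p1 * (1 - p1)))"
proof -
  have p_var: "0 < p1 * (1 - p1)" and q_var: "0 < q1 * (1 - q1)"
    using p1_pos p1_lt1 q1_pos q1_lt1 by simp_all
  have "q1U - q1A = D11 / (p1 * (1 - p1)) * (p1U - p1A)"
    unfolding q1U_def q1A_def p1U_def p1A_def D11_def p1_def q1_def
    by (rule allele1Freq_case_control_shift[OF hwe not_causal LE])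
      (use pi_pos pi_lt1 p1_pos p1_lt1 in \<open>simp_all add: \<pi>_def p1_def\<close>)
  then have "(q1U - q1A) / sqrt (q1 * (1 - q1))
      = D11 / sqrt (p1 * (1 - p1) * (q1 * (1 - q1))) * ((p1U - p1A) / sqrt (p1 * (1 - p1)))"
    by (rule divide_sqrt_rescale[OF p_var q_var])
  then show ?thesis
    by (simp only: mult.assoc)
qed

end
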